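(* Let $m\ge1$ be an integer, $\Gamma_1,\Gamma_2$ co-prime integers with $1<\Gamma_1<\Gamma_2$, $m_1=m\Gamma_1$, $m_2=m\Gamma_2$, and let $1\le j\le K+1$. Let $N$ be an integer with $0\le N<\min\big(m_2(1+\ddot n_{2,j}),\,m_1(1+\ddot n_{1,j})\big)$, with remainders $r_i=|N|_{m_i}$, and let $\tilde r_1,\tilde r_2$ be erroneous remainders whose errors satisfy $$-\frac{\sigma_j}{2}\le\frac{\Delta r_1-\Delta r_2}{m}<\frac{\sigma_j}{2}.$$ Let $\mathbf q_{21}=(\tilde r_1-\tilde r_2)/m$. Then: (1) if $\mathbf q_{21}\ge\sigma_j/2$, then $r_1>r_2$; (2) if $\mathbf q_{21}<-\sigma_j/2$, then $r_1<r_2$; (3) if $-\sigma_j/2\le\mathbf q_{21}<\sigma_j/2$, then $r_1=r_2$.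
   Context: $|a|_b$ is the remainder of the integer $a$ modulo the positive integer $b$. Erroneous remainders are integers $\tilde r_i$ with $0\le\tilde r_i<m_i$, errors $\Delta r_i=\tilde r_i-r_i$. Euclidean sequence: $\sigma_{-1}=\Gamma_2$, $\sigma_0=\Gamma_1$, $\sigma_i=|\sigma_{i-2}|_{\sigma_{i-1}}$ for $i\ge1$; $K\ge0$ is the index with $\sigma_K>1$ and $\sigma_{K+1}=1$. For $1\le n<\Gamma_1$, $S_{2,n}=\{|t\Gamma_2|_{\Gamma_1}: 0\le t\le n\}$ and $d_{2,n}$ is the minimum distance between two distinct elements of $S_{2,n}$; for $1\le n<\Gamma_2$, $S_{1,n}=\{|t\Gamma_1|_{\Gamma_2}: 0\le t\le n\}$ and $d_{1,n}$ is defined likewise. $\ddot n_{2,j}=\max\{n:1\le n<\Gamma_1,\ d_{2,n}\ge\sigma_j\}$, $\ddot n_{1,j}=\max\{n:1\le n<\Gamma_2,\ d_{1,n}\ge\sigma_j\}$. *)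

theory Defs
  imports Complex_Main
begin

(* Euclidean sequence: eucl G1 G2 k = sigma_{k-1}, i.e.
   eucl 0 = sigma_{-1} = G2, eucl 1 = sigma_0 = G1,
   eucl (k+2) = |eucl k|_{eucl (k+1)}. *)
fun eucl :: "int \<Rightarrow> int \<Rightarrow> nat \<Rightarrow> int" where
  "eucl G1 G2 0 = G2"
| "eucl G1 G2 (Suc 0) = G1"
| "eucl G1 G2 (Suc (Suc k)) = eucl G1 G2 k mod eucl G1 G2 (Suc k)"

definition sigma :: "int \<Rightarrow> int \<Rightarrow> nat \<Rightarrow> int" where
  "sigma G1 G2 i = eucl G1 G2 (Suc i)"

definition Kidx :: "int \<Rightarrow> int \<Rightarrow> nat" where
  "Kidx G1 G2 = (THE k. sigma G1 G2 k > 1 \<and> sigma G1 G2 (Suc k) = 1)"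

definition Sset :: "int \<Rightarrow> int \<Rightarrow> nat \<Rightarrow> int set" where
  "Sset a b n = {(int t * a) mod b | t. t \<le> n}"

definition mindist :: "int set \<Rightarrow> int" where
  "mindist A = Min {\<bar>x - y\<bar> | x y. x \<in> A \<and> y \<in> A \<and> x \<noteq> y}"

(* ddot a b s = max { n : 1 <= n < b, d(S a b n) >= s } ;
   ddot_{2,j} = ddot G2 G1 sigma_j, ddot_{1,j} = ddot G1 G2 sigma_j *)
definition ddot :: "int \<Rightarrow> int \<Rightarrow> int \<Rightarrow> nat" where
  "ddot a b s = Max {n. 1 \<le> n \<and> int n < b \<and> mindist (Sset a b n) \<ge> s}"

end

theory Submission
  imports Defs
begin

text \<open>Put n = N div m. Then r_i = m (n mod \<Gamma>_i) + N mod m, so r_1 - r_2 = m d with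
  d = (n mod \<Gamma>_1) - (n mod \<Gamma>_2). If d > 0, then d = (t \<Gamma>_2) mod \<Gamma>_1 for t = n div \<Gamma>_2, and the
  bound on N gives t \<le> n_{2,j}, so d and 0 are distinct points of S_{2,n_{2,j}} and d \<ge> \<sigma>_j;
  symmetrically if d < 0. Thus d = 0 or |d| \<ge> \<sigma>_j, and an error of less than \<sigma>_j/2 in
  (r_1 - r_2)/m cannot carry q_21 across the thresholds \<plusminus>\<sigma>_j/2.\<close>

lemma Sset_eq_image: "Sset a b n = (\<lambda>t. (int t * a) mod b) ` {..n}"
  unfolding Sset_def by auto

lemma finite_Sset: "finite (Sset a b n)"
  by (simp add: Sset_eq_image)

lemma zero_in_Sset: "0 \<in> Sset a b n"
  unfolding Sset_eq_image by (rule image_eqI[of _ _ 0]) auto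

lemma Sset_one: "Sset a b 1 = {0, a mod b}"
  by (auto simp: Sset_eq_image One_nat_def atMost_Suc)

lemma mindist_le:
  assumes "finite A" "x \<in> A" "y \<in> A" "x \<noteq> y"
  shows "mindist A \<le> \<bar>x - y\<bar>"
proof -
  have "{\<bar>x - y\<bar> | x y. x \<in> A \<and> y \<in> A \<and> x \<noteq> y} \<subseteq> (\<lambda>(x, y). \<bar>x - y\<bar>) ` (A \<times> A)"
    by auto
  then have "finite {\<bar>x - y\<bar> | x y. x \<in> A \<and> y \<in> A \<and> x \<noteq> y}"
    using assms(1) by (meson finite_SigmaI finite_imageI finite_subset)
  then show ?thesis
    unfolding mindist_def using assms by (intro Min_le) auto
qed

lemma mindist_doubleton_zero: "c \<noteq> 0 \<Longrightarrow> mindist {0, c} = \<bar>c\<bar>"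
proof -
  assume "c \<noteq> 0"
  then have "{\<bar>x - y\<bar> | x y. x \<in> {0, c} \<and> y \<in> {0, c} \<and> x \<noteq> y} = {\<bar>c\<bar>}"
    by auto (metis abs_minus_commute diff_zero)
  then show ?thesis unfolding mindist_def by simp
qed

lemma mindist_Sset_one: "a mod b \<noteq> 0 \<Longrightarrow> mindist (Sset a b 1) = \<bar>a mod b\<bar>"
  unfolding Sset_one by (rule mindist_doubleton_zero)

text \<open>The hypothesis on \<open>Sset a b 1\<close> makes the set in \<open>ddot_def\<close> nonempty, so that its
  \<open>Max\<close> is not a junk value.\<close>

lemma mindist_Sset_ddot:
  assumes "1 < b" "s \<le> mindist (Sset a b 1)"
  shows "s \<le> mindist (Sset a b (ddot a b s))"
proof -
  let ?C = "{n. 1 \<le> n \<and> int n < b \<and> mindist (Sset a b n) \<ge> s}"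
  have "finite ?C"
    by (rule finite_subset[of _ "{..nat b}"]) auto
  moreover have "1 \<in> ?C" using assms by auto
  ultimately have "Max ?C \<in> ?C" by (intro Max_in) blast+
  then show ?thesis unfolding ddot_def by simp
qed

lemma mod_diff_in_Sset:
  fixes a b x :: int
  assumes "0 < a" "0 < b" "0 \<le> x" "x < a * (1 + int n)" "x mod a < x mod b"
  shows "x mod b - x mod a \<in> Sset a b n"
proof -
  define t where "t = x div a"
  have "0 \<le> t" using assms(1,3) unfolding t_def by (simp add: pos_imp_zdiv_nonneg_iff)
  have "a * t + x mod a = x" unfolding t_def by simp
  then have "a * t < a * (1 + int n)" using assms(1,4) pos_mod_sign[of a x] by linarith
  then have "t \<le> int n" using assms(1) by simp
  have "(t * a) mod b = (x - x mod a) mod b"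
    unfolding t_def by (simp add: minus_mod_eq_mult_div mult.commute)
  also have "\<dots> = (x mod b - x mod a) mod b"
    by (simp add: mod_diff_left_eq)
  also have "\<dots> = x mod b - x mod a"
    using assms(5) pos_mod_sign[OF assms(1), of x] pos_mod_bound[OF assms(2), of x]
    by (intro mod_pos_pos_trivial) simp_all
  finally show ?thesis
    unfolding Sset_def using \<open>0 \<le> t\<close> \<open>t \<le> int n\<close>
    by (intro CollectI exI[of _ "nat t"]) auto
qed

lemma mod_diff_ge_of_ddot:
  fixes a b x s :: int
  assumes "0 < a" "1 < b" "0 < a mod b" "s \<le> a mod b"
    and "0 \<le> x" "x < a * (1 + int (ddot a b s))" "x mod a < x mod b"
  shows "s \<le> x mod b - x mod a"
proof -
  have "s \<le> mindist (Sset a b (ddot a b s))"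
    using assms(2-4) mindist_Sset_one[of a b] by (intro mindist_Sset_ddot) simp_all
  also have "\<dots> \<le> \<bar>(x mod b - x mod a) - 0\<bar>"
    using assms(1,2,5-7) by (intro mindist_le finite_Sset mod_diff_in_Sset zero_in_Sset) auto
  finally show ?thesis using assms(7) by simp
qed

lemma mod_eq_or_mod_dist_ge:
  fixes G1 G2 x s :: int
  assumes "1 < G1" "G1 < G2" "0 < G2 mod G1" "s \<le> G2 mod G1"
    and "0 \<le> x" "x < G2 * (1 + int (ddot G2 G1 s))" "x < G1 * (1 + int (ddot G1 G2 s))"
  shows "x mod G1 = x mod G2 \<or> s \<le> \<bar>x mod G1 - x mod G2\<bar>"
proof -
  have "G1 mod G2 = G1" "G2 mod G1 < G1" using assms(1,2) by simp_all
  consider "x mod G1 = x mod G2" | "x mod G2 < x mod G1" | "x mod G1 < x mod G2"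
    by linarith
  then show ?thesis
  proof cases
    case 2
    then show ?thesis using assms mod_diff_ge_of_ddot[of G2 G1 s x] by simp
  next
    case 3
    then show ?thesis
      using assms \<open>G1 mod G2 = G1\<close> \<open>G2 mod G1 < G1\<close> mod_diff_ge_of_ddot[of G1 G2 s x] by simp
  qed simp
qed

lemma coprime_mod_pos:
  fixes G1 G2 :: int
  assumes "1 < G1" "coprime G1 G2"
  shows "0 < G2 mod G1"
proof -
  have "\<not> G1 dvd G2"
  proof
    assume "G1 dvd G2"
    then have "is_unit G1" using assms(2) by (simp add: coprime_absorb_left)
    then show False using assms(1) by auto
  qed
  then have "G2 mod G1 \<noteq> 0" by (simp add: dvd_eq_mod_eq_0)
  moreover have "0 \<le> G2 mod G1" using assms(1) by simp
  ultimately show ?thesis by linarith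
qed

text \<open>Since \<open>a mod 0 = a\<close>, after its first zero the sequence alternates between \<open>0\<close> and its
  last nonzero term; it is not monotone, hence the two-step induction.\<close>

lemma eucl_bounded:
  fixes G1 G2 :: int
  assumes "0 < G2 mod G1"
  shows "2 \<le> k \<Longrightarrow> 0 \<le> eucl G1 G2 k \<and> eucl G1 G2 k \<le> G2 mod G1"
proof (induction k rule: less_induct)
  case (less k)
  consider "k = 2" | "k = 3" | "4 \<le> k"
    using less.prems by linarith
  then show ?case
  proof cases
    case 1
    then show ?thesis using assms by (simp add: numeral_2_eq_2)
  next
    case 2
    then show ?thesis using assms by (simp add: numeral_3_eq_3 less_imp_le)
  next
    case 3
    then obtain i where k: "k = Suc (Suc i)" "2 \<le> i"
      by (intro that[of "k - 2"]) auto
    then have IH: "0 \<le> eucl G1 G2 i" "eucl G1 G2 i \<le> G2 mod G1"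
        "0 \<le> eucl G1 G2 (Suc i)" "eucl G1 G2 (Suc i) \<le> G2 mod G1"
      using less.IH by auto
    show ?thesis
    proof (cases "eucl G1 G2 (Suc i) = 0")
      case False
      then have "0 < eucl G1 G2 (Suc i)" using IH(3) by simp
      then have "0 \<le> eucl G1 G2 i mod eucl G1 G2 (Suc i)"
          "eucl G1 G2 i mod eucl G1 G2 (Suc i) < eucl G1 G2 (Suc i)"
        by simp_all
      moreover have "eucl G1 G2 k = eucl G1 G2 i mod eucl G1 G2 (Suc i)" using k by simp
      ultimately show ?thesis using IH(4) by linarith
    qed (use k IH in simp)
  qed
qed

lemma sigma_le_mod:
  fixes G1 G2 :: int
  assumes "1 < G1" "coprime G1 G2" "1 \<le> j"
  shows "sigma G1 G2 j \<le> G2 mod G1"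
  using eucl_bounded[OF coprime_mod_pos[OF assms(1,2)], of "Suc j"] assms(3)
  unfolding sigma_def by simp

lemma mod_mult_diff_eq:
  fixes N m a b :: int
  assumes "0 \<le> a" "0 \<le> b"
  shows "N mod (m * a) - N mod (m * b) = m * (N div m mod a - N div m mod b)"
  using zmod_zmult2_eq[OF assms(1), of N m] zmod_zmult2_eq[OF assms(2), of N m]
  by (simp add: algebra_simps)

lemma zdiv_less_of_less_mult:
  fixes N m c :: int
  assumes "0 < m" "N < m * c"
  shows "N div m < c"
proof -
  have "m * (N div m) + N mod m = N" by simp
  then have "m * (N div m) < m * c" using assms pos_mod_sign[of m N] by linarith
  then show ?thesis using assms(1) by simp
qed

lemma threshold_decision:
  fixes q e s :: "'a::linordered_field"
  assumes "e = 0 \<or> s \<le> \<bar>e\<bar>" "- s / 2 \<le> q - e" "q - e < s / 2"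
  shows "(s / 2 \<le> q \<longrightarrow> 0 < e) \<and> (q < - s / 2 \<longrightarrow> e < 0)
    \<and> (- s / 2 \<le> q \<and> q < s / 2 \<longrightarrow> e = 0)"
  using assms by (auto simp: abs_if split: if_splits)

theorem lemma7:
  fixes m G1 G2 N rt1 rt2 :: int and j :: nat
  assumes hm: "m \<ge> 1"
    and hcop: "coprime G1 G2"
    and hG: "1 < G1" "G1 < G2"
    and hj: "1 \<le> j" "j \<le> Kidx G1 G2 + 1"
    and hN: "0 \<le> N"
      "N < min (m * G2 * (1 + int (ddot G2 G1 (sigma G1 G2 j))))
               (m * G1 * (1 + int (ddot G1 G2 (sigma G1 G2 j))))"
    and hrt: "0 \<le> rt1" "rt1 < m * G1" "0 \<le> rt2" "rt2 < m * G2"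
    and herr: "- real_of_int (sigma G1 G2 j) / 2
                 \<le> real_of_int ((rt1 - N mod (m * G1)) - (rt2 - N mod (m * G2))) / real_of_int m"
              "real_of_int ((rt1 - N mod (m * G1)) - (rt2 - N mod (m * G2))) / real_of_int m
                 < real_of_int (sigma G1 G2 j) / 2"
  shows "(real_of_int (rt1 - rt2) / real_of_int m \<ge> real_of_int (sigma G1 G2 j) / 2
            \<longrightarrow> N mod (m * G1) > N mod (m * G2))
       \<and> (real_of_int (rt1 - rt2) / real_of_int m < - real_of_int (sigma G1 G2 j) / 2
            \<longrightarrow> N mod (m * G1) < N mod (m * G2))
       \<and> (- real_of_int (sigma G1 G2 j) / 2 \<le> real_of_int (rt1 - rt2) / real_of_int m
            \<and> real_of_int (rt1 - rt2) / real_of_int m < real_of_int (sigma G1 G2 j) / 2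
            \<longrightarrow> N mod (m * G1) = N mod (m * G2))"
proof -
  define s where "s = sigma G1 G2 j"
  define n where "n = N div m"
  define d where "d = n mod G1 - n mod G2"
  have diff: "N mod (m * G1) - N mod (m * G2) = m * d"
    unfolding d_def n_def using hG by (intro mod_mult_diff_eq) simp_all
  have "n < G2 * (1 + int (ddot G2 G1 s))" "n < G1 * (1 + int (ddot G1 G2 s))"
    unfolding n_def s_def using hm hN(2) by (auto intro: zdiv_less_of_less_mult simp: mult.assoc)
  moreover have "0 \<le> n" using hN(1) hm unfolding n_def by (simp add: pos_imp_zdiv_nonneg_iff)
  moreover have "s \<le> G2 mod G1" unfolding s_def using hG(1) hcop hj(1) by (rule sigma_le_mod)
  ultimately have "n mod G1 = n mod G2 \<or> s \<le> \<bar>n mod G1 - n mod G2\<bar>"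
    using hG coprime_mod_pos[OF hG(1) hcop] by (intro mod_eq_or_mod_dist_ge)
  then have gap: "d = 0 \<or> s \<le> \<bar>d\<bar>" unfolding d_def by simp
  define q where "q = real_of_int (rt1 - rt2) / real_of_int m"
  have "q - real_of_int d
      = real_of_int ((rt1 - N mod (m * G1)) - (rt2 - N mod (m * G2))) / real_of_int m"
    unfolding q_def using hm diff by (simp add: field_simps)
  moreover have "real_of_int d = 0 \<or> real_of_int s \<le> \<bar>real_of_int d\<bar>"
    using gap by (metis of_int_0_eq_iff of_int_abs of_int_le_iff)
  ultimately have "(real_of_int s / 2 \<le> q \<longrightarrow> 0 < d) \<and> (q < - real_of_int s / 2 \<longrightarrow> d < 0)
      \<and> (- real_of_int s / 2 \<le> q \<and> q < real_of_int s / 2 \<longrightarrow> d = 0)"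
    using threshold_decision[of "real_of_int d" "real_of_int s" q] herr unfolding s_def by simp
  moreover have "0 < d \<longleftrightarrow> N mod (m * G2) < N mod (m * G1)" "d < 0 \<longleftrightarrow> N mod (m * G1) < N mod (m * G2)"
    using diff hm zero_less_mult_iff[of m d] mult_less_0_iff[of m d] by linarith+
  ultimately show ?thesis unfolding q_def s_def by auto
qed

end
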